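(* Let $n\geq 3$, $p,q>0$ with $pq>1$, $\alpha\in(0,n)$, $\sigma_1,\sigma_2\in[0,\alpha)$, with $q\geq p$ and $\sigma_1\geq\sigma_2$. Let $u,v$ be positive solutions of $$u(x)=\int_{\mathbb{R}^n}\frac{v(y)^q}{|x-y|^{n-\alpha}|y|^{\sigma_1}}\,dy,\qquad v(x)=\int_{\mathbb{R}^n}\frac{u(y)^p}{|x-y|^{n-\alpha}|y|^{\sigma_2}}\,dy,\qquad x\in\mathbb{R}^n,$$ satisfying $q_0+p_0\leq n-\alpha$. If $u,v$ are bounded and decay with the fast rates as $|x|\to\infty$, then $u,v$ are integrable solutions.
   Context: Define $$p_0=\frac{\alpha(1+p)-(\sigma_2+\sigma_1p)}{pq-1},\qquad q_0=\frac{\alpha(1+q)-(\sigma_1+\sigma_2q)}{pq-1},\qquad r_0=\frac{n}{q_0},\qquad s_0=\frac{n}{p_0}.$$ A positive solution $u,v$ is integrable if $u\in L^{r_0}(\mathbb{R}^n)$ and $v\in L^{s_0}(\mathbb{R}^n)$. The notation $f(x)\simeq g(x)$ means there exist constants $c,C>0$ with $cg(x)\leq f(x)\leq Cg(x)$ as $|x|\to\infty$. With $q\geq p$ and $\sigma_1\geq\sigma_2$, $u,v$ decay with the fast rates if $u(x)\simeq|x|^{-(n-\alpha)}$ and $v(x)\simeq|x|^{-(n-\alpha)}$ if $p(n-\alpha)+\sigma_2>n$; $v(x)\simeq|x|^{-(n-\alpha)}\ln|x|$ if $p(n-\alpha)+\sigma_2=n$; $v(x)\simeq|x|^{-(p(n-\alpha)-(\alpha-\sigma_2))}$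 if $p(n-\alpha)+\sigma_2<n$. *)

theory Defs
  imports "HOL-Analysis.Analysis"
begin

definition p0_exp :: "real \<Rightarrow> real \<Rightarrow> real \<Rightarrow> real \<Rightarrow> real \<Rightarrow> real" where
  "p0_exp \<alpha> p q \<sigma>1 \<sigma>2 = (\<alpha> * (1 + p) - (\<sigma>2 + \<sigma>1 * p)) / (p * q - 1)"

definition q0_exp :: "real \<Rightarrow> real \<Rightarrow> real \<Rightarrow> real \<Rightarrow> real \<Rightarrow> real" where
  "q0_exp \<alpha> p q \<sigma>1 \<sigma>2 = (\<alpha> * (1 + q) - (\<sigma>1 + \<sigma>2 * q)) / (p * q - 1)"

definition asymp_comparable :: "('a::real_normed_vector \<Rightarrow> real) \<Rightarrow> ('a \<Rightarrow> real) \<Rightarrow> bool" where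
  "asymp_comparable f g \<longleftrightarrow>
     (\<exists>c C R. c > 0 \<and> C > 0 \<and> (\<forall>x. norm x \<ge> R \<longrightarrow> c * g x \<le> f x \<and> f x \<le> C * g x))"

text \<open>Fast decay rates (for q \<ge> p, \<sigma>1 \<ge> \<sigma>2), n = DIM('a).\<close>
definition fast_decay :: "real \<Rightarrow> real \<Rightarrow> real \<Rightarrow> real \<Rightarrow>
    ('a::euclidean_space \<Rightarrow> real) \<Rightarrow> ('a \<Rightarrow> real) \<Rightarrow> bool" where
  "fast_decay \<alpha> p \<sigma>1 \<sigma>2 u v \<longleftrightarrow>
     (let n = real DIM('a) in
      asymp_comparable u (\<lambda>x. norm x powr (-(n - \<alpha>))) \<and>
      (if p * (n - \<alpha>) + \<sigma>2 > n then asymp_comparable v (\<lambda>x. norm x powr (-(n - \<alpha>)))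
       else if p * (n - \<alpha>) + \<sigma>2 = n then
         asymp_comparable v (\<lambda>x. norm x powr (-(n - \<alpha>)) * ln (norm x))
       else asymp_comparable v (\<lambda>x. norm x powr (-(p * (n - \<alpha>) - (\<alpha> - \<sigma>2))))))"

definition in_Lp :: "real \<Rightarrow> ('a::euclidean_space \<Rightarrow> real) \<Rightarrow> bool" where
  "in_Lp r f \<longleftrightarrow> f \<in> borel_measurable lborel \<and>
     (\<integral>\<^sup>+ x. ennreal (\<bar>f x\<bar> powr r) \<partial>lborel) < \<infinity>"

end

theory Submission imports Defs begin

text \<open>A bounded function with
  |f x| \<le> K |x| powr -\<gamma> near infinity lies in L^r as soon as r \<gamma> > n. The rate of u is
  n - \<alpha> > q0, and each of the three possible rates of v exceeds p0 because q0 + p0 \<le> n - \<alpha>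
  and p q0 = p0 + \<alpha> - \<sigma>2; the logarithm in the borderline case costs an arbitrarily small
  power.\<close>

lemma nn_integral_one_plus_abs_powr_finite:
  fixes t :: real
  assumes "t > 1"
  shows "(\<integral>\<^sup>+x. ennreal ((1 + \<bar>x\<bar>) powr (-t)) \<partial>lborel) < \<infinity>"
proof -
  define g :: "real \<Rightarrow> ennreal" where "g x = ennreal (x powr (-t)) * indicator {1..} x" for x
  have g_measurable[measurable]: "g \<in> borel_measurable borel"
    unfolding g_def by measurable
  have integral_g: "integral\<^sup>N lborel g = ennreal (-(1 powr (-t+1)) / (-t+1))"
    unfolding g_def
    by (rule nn_integral_has_integral_lebesgue') (use has_integral_powr_to_inf[of "-t" 1] assms in auto)
  have integral_g_reflected: "(\<integral>\<^sup>+x. g (-x) \<partial>lborel) = integral\<^sup>N lborel g"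
    using nn_integral_real_affine[OF g_measurable, of "-1" 0] by simp
  have "ennreal ((1 + \<bar>x\<bar>) powr (-t)) \<le> indicator {-1..1} x + g x + g (-x)" for x
  proof -
    consider "x \<ge> 1" | "x \<le> -1" | "\<bar>x\<bar> \<le> 1" by linarith
    then show ?thesis
    proof cases
      case 1
      then have "(1 + \<bar>x\<bar>) powr (-t) \<le> x powr (-t)"
        using assms by (intro powr_mono2') auto
      with 1 have "ennreal ((1 + \<bar>x\<bar>) powr (-t)) \<le> g x"
        by (simp add: g_def)
      then show ?thesis by (simp add: add_increasing2 order_trans[OF _ add_increasing])
    next
      case 2
      then have "(1 + \<bar>x\<bar>) powr (-t) \<le> (-x) powr (-t)"
        using assms by (intro powr_mono2') auto
      with 2 have "ennreal ((1 + \<bar>x\<bar>) powr (-t)) \<le> g (-x)"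
        by (simp add: g_def)
      then show ?thesis by (simp add: add_increasing)
    next
      case 3
      have "(1 + \<bar>x\<bar>) powr (-t) \<le> 1"
        using assms powr_mono2'[of "-t" 1 "1 + \<bar>x\<bar>"] by simp
      with 3 have "ennreal ((1 + \<bar>x\<bar>) powr (-t)) \<le> indicator {-1..1} x"
        by (simp add: abs_le_iff)
      then show ?thesis by (simp add: add_increasing2 order_trans[OF _ add_increasing])
    qed
  qed
  then have "(\<integral>\<^sup>+x. ennreal ((1 + \<bar>x\<bar>) powr (-t)) \<partial>lborel) \<le>
      (\<integral>\<^sup>+x. (indicator {-1..1} x + g x + g (-x)) \<partial>lborel)"
    by (intro nn_integral_mono)
  also have "\<dots> = emeasure lborel {-1..1::real} + integral\<^sup>N lborel g + integral\<^sup>N lborel g"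
    by (subst nn_integral_add; simp add: nn_integral_add integral_g_reflected)
  also have "\<dots> < \<infinity>"
    by (simp add: integral_g)
  finally show ?thesis .
qed

text \<open>Since (1 + |x|) powr -s \<le> \<Prod>b\<in>Basis. (1 + |x\<bullet>b|) powr -(s/n), the integral factorises
  into n one-dimensional ones.\<close>
lemma nn_integral_one_plus_norm_powr_finite:
  assumes "s > real DIM('a::euclidean_space)"
  shows "(\<integral>\<^sup>+(x::'a). ennreal ((1 + norm x) powr (-s)) \<partial>lborel) < \<infinity>"
proof -
  define t where "t = s / real DIM('a)"
  have "t > 1" and s_eq: "s = t * real DIM('a)"
    using assms by (simp_all add: t_def)
  have pointwise: "(1 + norm x) powr (-s) \<le> (\<Prod>b\<in>Basis. (1 + \<bar>x \<bullet> b\<bar>) powr (-t))" for x :: 'a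
  proof -
    have "((1 + norm x) powr (-t)) ^ DIM('a) = ((1 + norm x) powr (-t)) powr real DIM('a)"
      by (rule powr_realpow[symmetric]) (smt (verit) norm_ge_zero powr_gt_zero)
    then have "(1 + norm x) powr (-s) = ((1 + norm x) powr (-t)) ^ DIM('a)"
      by (simp add: s_eq powr_powr)
    also have "\<dots> = (\<Prod>b\<in>(Basis::'a set). (1 + norm x) powr (-t))"
      by simp
    also have "\<dots> \<le> (\<Prod>b\<in>Basis. (1 + \<bar>x \<bullet> b\<bar>) powr (-t))"
      using \<open>t > 1\<close> by (intro prod_mono conjI powr_mono2') (auto simp: Basis_le_norm)
    finally show ?thesis .
  qed
  have "(\<integral>\<^sup>+(x::'a). ennreal ((1 + norm x) powr (-s)) \<partial>lborel) \<le>
      (\<integral>\<^sup>+(x::'a). (\<Prod>b\<in>Basis. ennreal ((1 + \<bar>x \<bullet> b\<bar>) powr (-t))) \<partial>lborel)"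
    by (intro nn_integral_mono) (simp add: prod_ennreal ennreal_leI pointwise)
  also have "\<dots> < \<infinity>"
    by (subst nn_integral_lborel_prod[where f="\<lambda>b y. ennreal ((1 + \<bar>y\<bar>) powr (-t))"])
       (use nn_integral_one_plus_abs_powr_finite[OF \<open>t > 1\<close>] in \<open>auto simp: power_less_top_ennreal\<close>)
  finally show ?thesis .
qed

definition decays_with_rate :: "real \<Rightarrow> ('a::real_normed_vector \<Rightarrow> real) \<Rightarrow> bool" where
  "decays_with_rate \<gamma> f \<longleftrightarrow> (\<exists>K R. \<forall>x. R \<le> norm x \<longrightarrow> \<bar>f x\<bar> \<le> K * norm x powr (-\<gamma>))"

lemma bounded_decaying_le_one_plus_norm_powr:
  fixes f :: "'a::real_normed_vector \<Rightarrow> real"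
  assumes "bounded (range f)" "decays_with_rate \<gamma> f" "\<gamma> \<ge> 0"
  obtains C where "\<And>x. \<bar>f x\<bar> \<le> C * (1 + norm x) powr (-\<gamma>)"
proof -
  obtain M where M: "\<And>x. \<bar>f x\<bar> \<le> M"
    using assms(1) unfolding bounded_iff by (metis rangeI real_norm_def)
  obtain K R where KR: "\<And>x. R \<le> norm x \<Longrightarrow> \<bar>f x\<bar> \<le> K * norm x powr (-\<gamma>)"
    using assms(2) unfolding decays_with_rate_def by blast
  define R' where "R' = max R 1"
  define C where "C = max (K * 2 powr \<gamma>) (M * (1 + R') powr \<gamma>)"
  have "\<bar>f x\<bar> \<le> C * (1 + norm x) powr (-\<gamma>)" for x
  proof (cases "R' \<le> norm x")
    case True
    then have "norm x \<ge> 1" "R \<le> norm x"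
      by (auto simp: R'_def)
    have "(1 + norm x) powr \<gamma> \<le> (2 * norm x) powr \<gamma>"
      using \<open>norm x \<ge> 1\<close> assms(3) by (intro powr_mono2) auto
    moreover have "norm x powr \<gamma> > 0" "(1 + norm x) powr \<gamma> > 0"
      using \<open>norm x \<ge> 1\<close> by auto
    ultimately have far: "norm x powr (-\<gamma>) \<le> 2 powr \<gamma> * (1 + norm x) powr (-\<gamma>)"
      by (simp add: powr_mult powr_minus divide_simps mult.commute)
    have "0 \<le> K * norm x powr (-\<gamma>)"
      using KR[OF \<open>R \<le> norm x\<close>] by (meson abs_ge_zero order_trans)
    then have "K \<ge> 0"
      using \<open>norm x \<ge> 1\<close> by (auto simp: zero_le_mult_iff)
    have "\<bar>f x\<bar> \<le> K * norm x powr (-\<gamma>)"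
      using KR[OF \<open>R \<le> norm x\<close>] .
    also have "\<dots> \<le> K * 2 powr \<gamma> * (1 + norm x) powr (-\<gamma>)"
      unfolding mult.assoc using far \<open>K \<ge> 0\<close> by (rule mult_left_mono)
    also have "\<dots> \<le> C * (1 + norm x) powr (-\<gamma>)"
      unfolding C_def by (intro mult_right_mono max.cobounded1 powr_ge_zero)
    finally show ?thesis .
  next
    case False
    have "(1 + norm x) powr \<gamma> \<le> (1 + R') powr \<gamma>"
      using False assms(3) by (intro powr_mono2) auto
    moreover have "(1 + norm x) powr \<gamma> > 0"
      using norm_ge_zero[of x] by (simp add: add_nonneg_eq_0_iff)
    ultimately have near: "1 \<le> (1 + R') powr \<gamma> * (1 + norm x) powr (-\<gamma>)"
      by (simp add: powr_minus divide_simps)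
    have "M \<ge> 0"
      using M[of x] by linarith
    have "\<bar>f x\<bar> \<le> M"
      by (rule M)
    also have "\<dots> \<le> M * (1 + R') powr \<gamma> * (1 + norm x) powr (-\<gamma>)"
      unfolding mult.assoc using near \<open>M \<ge> 0\<close> by (simp add: mult_le_cancel_left1)
    also have "\<dots> \<le> C * (1 + norm x) powr (-\<gamma>)"
      unfolding C_def by (intro mult_right_mono max.cobounded2 powr_ge_zero)
    finally show ?thesis .
  qed
  then show ?thesis
    using that by blast
qed

lemma in_Lp_if_bounded_decaying:
  fixes f :: "'a::euclidean_space \<Rightarrow> real"
  assumes "f \<in> borel_measurable lborel" "bounded (range f)" "decays_with_rate \<gamma> f"
    and "r > 0" "r * \<gamma> > real DIM('a)"
  shows "in_Lp r f"
proof -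
  have "\<gamma> > 0"
    using assms(4,5) by (metis zero_less_mult_pos of_nat_0_le_iff le_less_trans)
  then obtain C where C: "\<And>x. \<bar>f x\<bar> \<le> C * (1 + norm x) powr (-\<gamma>)"
    using bounded_decaying_le_one_plus_norm_powr[OF assms(2,3)] by (meson less_imp_le)
  have "\<bar>f 0\<bar> \<le> C"
    using C[of 0] by simp
  then have "C \<ge> 0"
    by (meson abs_ge_zero order_trans)
  have pointwise: "\<bar>f x\<bar> powr r \<le> C powr r * (1 + norm x) powr (-(r * \<gamma>))" for x
  proof -
    have "\<bar>f x\<bar> powr r \<le> (C * (1 + norm x) powr (-\<gamma>)) powr r"
      using C assms(4) by (intro powr_mono2) auto
    also have "\<dots> = C powr r * (1 + norm x) powr (-(r * \<gamma>))"
      using \<open>C \<ge> 0\<close> by (simp add: powr_mult powr_powr mult.commute)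
    finally show ?thesis .
  qed
  have "(\<integral>\<^sup>+x. ennreal (\<bar>f x\<bar> powr r) \<partial>lborel) \<le>
      (\<integral>\<^sup>+(x::'a). ennreal (C powr r) * ennreal ((1 + norm x) powr (-(r * \<gamma>))) \<partial>lborel)"
    by (intro nn_integral_mono) (simp add: ennreal_mult[symmetric] ennreal_leI pointwise)
  also have "\<dots> = ennreal (C powr r) * (\<integral>\<^sup>+(x::'a). ennreal ((1 + norm x) powr (-(r * \<gamma>))) \<partial>lborel)"
    by (rule nn_integral_cmult) measurable
  also have "\<dots> < \<infinity>"
    using nn_integral_one_plus_norm_powr_finite[OF assms(5)] by (simp add: ennreal_mult_less_top)
  finally show ?thesis
    unfolding in_Lp_def using assms(1) by simp
qed

lemma in_Lp_DIM_divide_if_bounded_decaying: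
  fixes f :: "'a::euclidean_space \<Rightarrow> real"
  assumes "f \<in> borel_measurable lborel" "bounded (range f)" "decays_with_rate \<gamma> f"
    and "0 < a" "a < \<gamma>"
  shows "in_Lp (real DIM('a) / a) f"
proof (rule in_Lp_if_bounded_decaying[OF assms(1-3)])
  show "real DIM('a) / a > 0"
    using assms(4) by simp
  have "real DIM('a) * 1 < real DIM('a) * (\<gamma> / a)"
    using assms(4,5) by (intro mult_strict_left_mono) auto
  then show "real DIM('a) / a * \<gamma> > real DIM('a)"
    by simp
qed

lemma decays_with_rate_if_asymp_comparable_powr:
  assumes "asymp_comparable f (\<lambda>x. norm x powr (-\<gamma>))"
  shows "decays_with_rate \<gamma> f"
proof -
  obtain c C R where "c > 0"
    and bounds: "\<And>x. R \<le> norm x \<Longrightarrow> c * norm x powr (-\<gamma>) \<le> f x \<and> f x \<le> C * norm x powr (-\<gamma>)"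
    using assms unfolding asymp_comparable_def by blast
  have "\<bar>f x\<bar> \<le> C * norm x powr (-\<gamma>)" if "R \<le> norm x" for x
  proof -
    have "0 \<le> c * norm x powr (-\<gamma>)"
      using \<open>c > 0\<close> by simp
    then show ?thesis
      using bounds[OF that] by linarith
  qed
  then show ?thesis
    unfolding decays_with_rate_def by blast
qed

lemma decays_with_rate_if_asymp_comparable_powr_ln:
  assumes "asymp_comparable f (\<lambda>x. norm x powr (-a) * ln (norm x))" "\<epsilon> > 0"
  shows "decays_with_rate (a - \<epsilon>) f"
proof -
  obtain c C R where "c > 0" and bounds: "\<And>x. R \<le> norm x \<Longrightarrow>
      c * (norm x powr (-a) * ln (norm x)) \<le> f x \<and> f x \<le> C * (norm x powr (-a) * ln (norm x))"
    using assms(1) unfolding asymp_comparable_def by blast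
  have "\<bar>f x\<bar> \<le> max C 0 / \<epsilon> * norm x powr (-(a - \<epsilon>))" if "max R 1 \<le> norm x" for x
  proof -
    from that have "R \<le> norm x" "1 \<le> norm x"
      by auto
    then have "0 \<le> c * (norm x powr (-a) * ln (norm x))"
      using \<open>c > 0\<close> by simp
    then have "\<bar>f x\<bar> \<le> C * (norm x powr (-a) * ln (norm x))"
      using bounds[OF \<open>R \<le> norm x\<close>] by linarith
    also have "\<dots> \<le> max C 0 * (norm x powr (-a) * ln (norm x))"
      using \<open>1 \<le> norm x\<close> by (intro mult_right_mono) auto
    also have "\<dots> \<le> max C 0 * (norm x powr (-a) * (norm x powr \<epsilon> / \<epsilon>))"
      using ln_powr_bound[OF \<open>1 \<le> norm x\<close> assms(2)] by (intro mult_left_mono) auto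
    also have "\<dots> = max C 0 / \<epsilon> * norm x powr (-(a - \<epsilon>))"
      using \<open>1 \<le> norm x\<close> by (simp add: powr_add[symmetric])
    finally show ?thesis .
  qed
  then show ?thesis
    unfolding decays_with_rate_def by blast
qed

lemma fast_decay_decays_with_rate_fst:
  fixes u v :: "'a::euclidean_space \<Rightarrow> real"
  assumes "fast_decay \<alpha> p \<sigma>1 \<sigma>2 u v"
  shows "decays_with_rate (real DIM('a) - \<alpha>) u"
  using assms unfolding fast_decay_def Let_def
  by (auto intro: decays_with_rate_if_asymp_comparable_powr)

lemma fast_decay_decays_faster_snd:
  fixes u v :: "'a::euclidean_space \<Rightarrow> real"
  defines "n \<equiv> real DIM('a)"
  assumes "fast_decay \<alpha> p \<sigma>1 \<sigma>2 u v"
    and "a < n - \<alpha>" "a < p * (n - \<alpha>) - (\<alpha> - \<sigma>2)"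
  shows "\<exists>\<gamma>>a. decays_with_rate \<gamma> v"
proof -
  consider "asymp_comparable v (\<lambda>x. norm x powr (-(n - \<alpha>)))"
    | "asymp_comparable v (\<lambda>x. norm x powr (-(n - \<alpha>)) * ln (norm x))"
    | "asymp_comparable v (\<lambda>x. norm x powr (-(p * (n - \<alpha>) - (\<alpha> - \<sigma>2))))"
    using assms(2) unfolding fast_decay_def Let_def n_def by (auto split: if_splits)
  then show ?thesis
  proof cases
    case 1
    then show ?thesis
      using assms(3) decays_with_rate_if_asymp_comparable_powr by blast
  next
    case 2
    define \<epsilon> where "\<epsilon> = (n - \<alpha> - a) / 2"
    have "\<epsilon> > 0" "n - \<alpha> - \<epsilon> > a"
      using assms(3) by (simp_all add: \<epsilon>_def field_simps)
    then show ?thesis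
      using 2 decays_with_rate_if_asymp_comparable_powr_ln by blast
  next
    case 3
    then show ?thesis
      using assms(4) decays_with_rate_if_asymp_comparable_powr by blast
  qed
qed

lemma p0_exp_pos:
  assumes "p * q > 1" "p \<ge> 0" "\<sigma>1 \<le> \<alpha>" "\<sigma>2 < \<alpha>"
  shows "p0_exp \<alpha> p q \<sigma>1 \<sigma>2 > 0"
proof -
  have "\<alpha> * (1 + p) - (\<sigma>2 + \<sigma>1 * p) = (\<alpha> - \<sigma>2) + p * (\<alpha> - \<sigma>1)"
    by (simp add: algebra_simps)
  also have "\<dots> > 0"
    using assms by (intro add_pos_nonneg mult_nonneg_nonneg) auto
  finally show ?thesis
    unfolding p0_exp_def using assms by (intro divide_pos_pos) simp_all
qed

lemma q0_exp_pos:
  assumes "p * q > 1" "q \<ge> 0" "\<sigma>1 < \<alpha>" "\<sigma>2 \<le> \<alpha>"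
  shows "q0_exp \<alpha> p q \<sigma>1 \<sigma>2 > 0"
proof -
  have "\<alpha> * (1 + q) - (\<sigma>1 + \<sigma>2 * q) = (\<alpha> - \<sigma>1) + q * (\<alpha> - \<sigma>2)"
    by (simp add: algebra_simps)
  also have "\<dots> > 0"
    using assms by (intro add_pos_nonneg mult_nonneg_nonneg) auto
  finally show ?thesis
    unfolding q0_exp_def using assms by (intro divide_pos_pos) simp_all
qed

lemma p_times_q0_exp:
  assumes "p * q \<noteq> 1"
  shows "p * q0_exp \<alpha> p q \<sigma>1 \<sigma>2 = p0_exp \<alpha> p q \<sigma>1 \<sigma>2 + \<alpha> - \<sigma>2"
  using assms unfolding p0_exp_def q0_exp_def by (simp add: field_simps)

theorem proposition4p5:
  fixes u v :: "'a::euclidean_space \<Rightarrow> real"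
    and p q \<alpha> \<sigma>1 \<sigma>2 :: real
  defines "n \<equiv> real DIM('a)"
  assumes dim: "DIM('a) \<ge> 3"
    and pq: "p > 0" "q > 0" "p * q > 1"
    and alpha: "0 < \<alpha>" "\<alpha> < n"
    and sigma: "0 \<le> \<sigma>1" "\<sigma>1 < \<alpha>" "0 \<le> \<sigma>2" "\<sigma>2 < \<alpha>"
    and order: "q \<ge> p" "\<sigma>1 \<ge> \<sigma>2"
    and pos: "\<And>x. u x > 0" "\<And>x. v x > 0"
    and meas: "u \<in> borel_measurable lborel" "v \<in> borel_measurable lborel"
    and eq_u: "\<And>x. ennreal (u x) =
       (\<integral>\<^sup>+ y. ennreal (v y powr q / (norm (x - y) powr (n - \<alpha>) * norm y powr \<sigma>1)) \<partial>lborel)"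
    and eq_v: "\<And>x. ennreal (v x) =
       (\<integral>\<^sup>+ y. ennreal (u y powr p / (norm (x - y) powr (n - \<alpha>) * norm y powr \<sigma>2)) \<partial>lborel)"
    and exps: "q0_exp \<alpha> p q \<sigma>1 \<sigma>2 + p0_exp \<alpha> p q \<sigma>1 \<sigma>2 \<le> n - \<alpha>"
    and bdd: "bounded (range u)" "bounded (range v)"
    and decay: "fast_decay \<alpha> p \<sigma>1 \<sigma>2 u v"
  shows "in_Lp (n / q0_exp \<alpha> p q \<sigma>1 \<sigma>2) u \<and> in_Lp (n / p0_exp \<alpha> p q \<sigma>1 \<sigma>2) v"
proof
  define P0 where "P0 = p0_exp \<alpha> p q \<sigma>1 \<sigma>2"
  define Q0 where "Q0 = q0_exp \<alpha> p q \<sigma>1 \<sigma>2"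
  have "P0 > 0" "Q0 > 0"
    unfolding P0_def Q0_def using pq sigma by (auto intro: p0_exp_pos q0_exp_pos)
  have "Q0 < n - \<alpha>"
    using exps \<open>P0 > 0\<close> by (simp add: P0_def Q0_def)
  with \<open>Q0 > 0\<close> show "in_Lp (n / q0_exp \<alpha> p q \<sigma>1 \<sigma>2) u"
    using in_Lp_DIM_divide_if_bounded_decaying[OF meas(1) bdd(1) fast_decay_decays_with_rate_fst[OF decay]]
    unfolding n_def Q0_def by blast
  have "p * (Q0 + P0) \<le> p * (n - \<alpha>)"
    using exps pq by (simp add: P0_def Q0_def)
  moreover have "p * Q0 = P0 + \<alpha> - \<sigma>2"
    unfolding P0_def Q0_def using pq by (intro p_times_q0_exp) simp
  moreover have "p * P0 > 0"
    using \<open>P0 > 0\<close> pq by simp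
  ultimately have "P0 < p * (n - \<alpha>) - (\<alpha> - \<sigma>2)"
    by (simp add: distrib_left)
  moreover have "P0 < n - \<alpha>"
    using exps \<open>Q0 > 0\<close> by (simp add: P0_def Q0_def)
  ultimately obtain \<gamma> where "P0 < \<gamma>" "decays_with_rate \<gamma> v"
    using fast_decay_decays_faster_snd[OF decay] unfolding n_def by blast
  with \<open>P0 > 0\<close> show "in_Lp (n / p0_exp \<alpha> p q \<sigma>1 \<sigma>2) v"
    using in_Lp_DIM_divide_if_bounded_decaying[OF meas(2) bdd(2)]
    unfolding n_def P0_def by blast
qed

end
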